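(* Let $K\subseteq[0,1]^n$ and let $f_1,\dots,f_k:K\to[0,1]$ be polynomially bounded on $K$. Then their sum $f:=f_1+\dots+f_k$ is polynomially bounded on $K$.
   Context: For a partition $[n]=A\sqcup S\sqcup B$, the open face is $F_{A,S,B}=\{p\in[0,1]^n: p_i=0\ (i\in A),\ 0<p_i<1\ (i\in S),\ p_i=1\ (i\in B)\}$. For $T\subseteq[n]$, $p^T=\prod_{i\in T}p_i$, $(1-p)^T=\prod_{i\in T}(1-p_i)$. A nonnegative function $h$ on $K$ is polynomially bounded on $K$ if there exist an integer $m\ge0$ and a real $c>0$ such that for every open face $F_{A,S,B}$: if some $q\in K\cap F_{A,S,B}$ has $h(q)>0$, then $h(p)\ge c\left((1-p)^A p^S(1-p)^S p^B\right)^m$ for all $p\in K$. *)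

theory Defs
  imports "HOL-Analysis.Analysis"
begin

text \<open>Points of [0,1]^n are represented as functions nat => real; only the
coordinates i < n (i.e. the index set {..<n}, standing for [n]) matter.\<close>

definition unit_cube :: "nat \<Rightarrow> (nat \<Rightarrow> real) set" where
  "unit_cube n = {p. \<forall>i<n. 0 \<le> p i \<and> p i \<le> 1}"

definition open_face :: "nat \<Rightarrow> nat set \<Rightarrow> nat set \<Rightarrow> nat set \<Rightarrow> (nat \<Rightarrow> real) set" where
  "open_face n A S B = {p \<in> unit_cube n.
      (\<forall>i\<in>A. p i = 0) \<and> (\<forall>i\<in>S. 0 < p i \<and> p i < 1) \<and> (\<forall>i\<in>B. p i = 1)}"

definition is_partition3 :: "nat \<Rightarrow> nat set \<Rightarrow> nat set \<Rightarrow> nat set \<Rightarrow> bool" where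
  "is_partition3 n A S B \<longleftrightarrow> A \<union> S \<union> B = {..<n} \<and>
      A \<inter> S = {} \<and> A \<inter> B = {} \<and> S \<inter> B = {}"

definition face_monomial :: "nat set \<Rightarrow> nat set \<Rightarrow> nat set \<Rightarrow> (nat \<Rightarrow> real) \<Rightarrow> real" where
  "face_monomial A S B p =
     (\<Prod>i\<in>A. 1 - p i) * (\<Prod>i\<in>S. p i) * (\<Prod>i\<in>S. 1 - p i) * (\<Prod>i\<in>B. p i)"

definition poly_bounded_on :: "nat \<Rightarrow> (nat \<Rightarrow> real) set \<Rightarrow> ((nat \<Rightarrow> real) \<Rightarrow> real) \<Rightarrow> bool" where
  "poly_bounded_on n K h \<longleftrightarrow>
     (\<forall>p\<in>K. 0 \<le> h p) \<and>
     (\<exists>(m::nat) (c::real). c > 0 \<and>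
        (\<forall>A S B. is_partition3 n A S B \<longrightarrow>
           (\<exists>q\<in>K \<inter> open_face n A S B. h q > 0) \<longrightarrow>
           (\<forall>p\<in>K. h p \<ge> c * (face_monomial A S B p) ^ m)))"

end

theory Submission
  imports Defs
begin

text \<open>Since every face monomial takes values in [0,1], a polynomial lower bound
  c x^m can always be weakened to a smaller constant and a larger exponent. Two
  polynomially bounded functions therefore admit a common pair (m, c), and that pair
  works for their sum: where the sum is positive at some point of a face, one of the
  summands is, and that summand alone already dominates c x^m on all of K.\<close>

definition poly_lower_bound ::
    "nat \<Rightarrow> (nat \<Rightarrow> real) set \<Rightarrow> ((nat \<Rightarrow> real) \<Rightarrow> real) \<Rightarrow> nat \<Rightarrow> real \<Rightarrow> bool" where
  "poly_lower_bound n K h m c \<longleftrightarrow>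
     (\<forall>A S B. is_partition3 n A S B \<longrightarrow>
        (\<exists>q\<in>K \<inter> open_face n A S B. h q > 0) \<longrightarrow>
        (\<forall>p\<in>K. c * (face_monomial A S B p) ^ m \<le> h p))"

lemma poly_bounded_on_iff:
  "poly_bounded_on n K h \<longleftrightarrow>
     (\<forall>p\<in>K. 0 \<le> h p) \<and> (\<exists>m c. c > 0 \<and> poly_lower_bound n K h m c)"
  unfolding poly_bounded_on_def poly_lower_bound_def by auto

lemma face_monomial_bounds:
  assumes "p \<in> unit_cube n" and "A \<union> S \<union> B \<subseteq> {..<n}"
  shows "0 \<le> face_monomial A S B p" and "face_monomial A S B p \<le> 1"
proof -
  have unit: "0 \<le> p i" "p i \<le> 1" if "i \<in> A \<union> S \<union> B" for i
    using assms that unfolding unit_cube_def by auto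
  have "0 \<le> (\<Prod>i\<in>A. 1 - p i)" "(\<Prod>i\<in>A. 1 - p i) \<le> 1"
    and "0 \<le> (\<Prod>i\<in>S. p i)" "(\<Prod>i\<in>S. p i) \<le> 1"
    and "0 \<le> (\<Prod>i\<in>S. 1 - p i)" "(\<Prod>i\<in>S. 1 - p i) \<le> 1"
    and "0 \<le> (\<Prod>i\<in>B. p i)" "(\<Prod>i\<in>B. p i) \<le> 1"
    using unit by (auto intro!: prod_nonneg prod_le_1)
  then show "0 \<le> face_monomial A S B p" and "face_monomial A S B p \<le> 1"
    unfolding face_monomial_def by (simp_all add: mult_le_one)
qed

lemma poly_lower_bound_weaken:
  assumes "K \<subseteq> unit_cube n" and "poly_lower_bound n K h m c"
    and "m \<le> m'" and "0 \<le> c'" and "c' \<le> c"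
  shows "poly_lower_bound n K h m' c'"
  unfolding poly_lower_bound_def
proof (intro allI impI ballI)
  fix A S B p
  assume part: "is_partition3 n A S B"
    and pos: "\<exists>q\<in>K \<inter> open_face n A S B. h q > 0" and "p \<in> K"
  define x where "x = face_monomial A S B p"
  have "A \<union> S \<union> B \<subseteq> {..<n}"
    using part unfolding is_partition3_def by blast
  then have "0 \<le> x" "x \<le> 1"
    using face_monomial_bounds \<open>p \<in> K\<close> assms(1) unfolding x_def by auto
  then have "c' * x ^ m' \<le> c' * x ^ m"
    using \<open>m \<le> m'\<close> \<open>0 \<le> c'\<close> by (simp add: mult_left_mono power_decreasing)
  also have "\<dots> \<le> c * x ^ m"
    using \<open>c' \<le> c\<close> \<open>0 \<le> x\<close> by (simp add: mult_right_mono)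
  also have "\<dots> \<le> h p"
    using assms(2) part pos \<open>p \<in> K\<close> unfolding poly_lower_bound_def x_def by blast
  finally show "c' * (face_monomial A S B p) ^ m' \<le> h p"
    unfolding x_def .
qed

lemma poly_lower_bound_add:
  assumes "\<forall>p\<in>K. 0 \<le> g p" and "\<forall>p\<in>K. 0 \<le> h p"
    and "poly_lower_bound n K g m c" and "poly_lower_bound n K h m c"
  shows "poly_lower_bound n K (\<lambda>p. g p + h p) m c"
  unfolding poly_lower_bound_def
proof (intro allI impI ballI)
  fix A S B p
  assume part: "is_partition3 n A S B"
    and "\<exists>q\<in>K \<inter> open_face n A S B. g q + h q > 0" and "p \<in> K"
  then have "(\<exists>q\<in>K \<inter> open_face n A S B. g q > 0) \<or> (\<exists>q\<in>K \<inter> open_face n A S B. h q > 0)"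
    by (meson add_nonpos_nonpos not_less)
  then have "c * (face_monomial A S B p) ^ m \<le> g p \<or> c * (face_monomial A S B p) ^ m \<le> h p"
    using assms(3,4) part \<open>p \<in> K\<close> unfolding poly_lower_bound_def by blast
  then show "c * (face_monomial A S B p) ^ m \<le> g p + h p"
    using assms(1,2) \<open>p \<in> K\<close> by fastforce
qed

lemma poly_bounded_on_zero: "poly_bounded_on n K (\<lambda>p. 0)"
  unfolding poly_bounded_on_iff poly_lower_bound_def by (auto intro: exI[of _ 1])

lemma poly_bounded_on_add:
  assumes "K \<subseteq> unit_cube n"
    and "poly_bounded_on n K g" and "poly_bounded_on n K h"
  shows "poly_bounded_on n K (\<lambda>p. g p + h p)"
proof -
  obtain m1 c1 m2 c2 where "c1 > 0" "poly_lower_bound n K g m1 c1"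
    and "c2 > 0" "poly_lower_bound n K h m2 c2"
    using assms(2,3) unfolding poly_bounded_on_iff by blast
  then have "poly_lower_bound n K g (max m1 m2) (min c1 c2)"
    and "poly_lower_bound n K h (max m1 m2) (min c1 c2)"
    using poly_lower_bound_weaken[OF assms(1)] by simp_all
  then have "poly_lower_bound n K (\<lambda>p. g p + h p) (max m1 m2) (min c1 c2)"
    using assms(2,3) poly_lower_bound_add unfolding poly_bounded_on_iff by blast
  moreover have "min c1 c2 > 0"
    using \<open>c1 > 0\<close> \<open>c2 > 0\<close> by simp
  moreover have "\<forall>p\<in>K. 0 \<le> g p + h p"
    using assms(2,3) unfolding poly_bounded_on_iff by simp
  ultimately show ?thesis
    unfolding poly_bounded_on_iff by blast
qed

lemma poly_bounded_on_sum:
  assumes "K \<subseteq> unit_cube n" and "finite I"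
    and "\<And>j. j \<in> I \<Longrightarrow> poly_bounded_on n K (f j)"
  shows "poly_bounded_on n K (\<lambda>p. \<Sum>j\<in>I. f j p)"
  using assms(2,3)
proof (induction I rule: finite_induct)
  case empty
  show ?case using poly_bounded_on_zero by simp
next
  case (insert j I)
  then show ?case
    using poly_bounded_on_add[OF assms(1)] by simp
qed

theorem lemma11:
  fixes n k :: nat and K :: "(nat \<Rightarrow> real) set"
    and f :: "nat \<Rightarrow> (nat \<Rightarrow> real) \<Rightarrow> real"
  assumes "K \<subseteq> unit_cube n"
    and "\<And>j p. j < k \<Longrightarrow> p \<in> K \<Longrightarrow> 0 \<le> f j p \<and> f j p \<le> 1"
    and "\<And>j. j < k \<Longrightarrow> poly_bounded_on n K (f j)"
  shows "poly_bounded_on n K (\<lambda>p. \<Sum>j<k. f j p)"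
  using poly_bounded_on_sum[OF assms(1) finite_lessThan] assms(3) by simp

end
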